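(* Let $R$ be a $\Gamma$-ring and $r\in R[2]$ a formal difference law in $R$. Then $(p^2_1(r))^2=1$ in $R[1]$, and the element $w=p^3_2\circ p^4_2(r^2)\in R[2]$ is a formal sum law in $R$. Moreover, if $R$ is discrete, the multiplicative map $H\mathbb{N}\to R$ determined by $w$ (sending $1_{2^n}\mapsto w^n$) equals the composite of the inclusion $H\mathbb{N}\to H\mathbb{Z}$ with the multiplicative map $H\mathbb{Z}\to R$ determined by $r$ (sending $\pm1_n\mapsto r^n$).
   Context: Let $[n]=\{0,1,\dots,n\}$, pointed at $0$. A $\Gamma$-space is a functor $F$ from the finite pointed sets $[n]$ (with pointed maps) to pointed simplicial sets with $F[0]$ a point; for a pointed map $f$ we write $f$ also for $F(f)$; $\Sigma_n$ acts on $F[n]$ via permutations of $\{1,\dots,n\}$. We identify $[n]\wedge[m]$ with $[nm]$ via $i\wedge j\mapsto (j-1)n+i$. A $\Gamma$-ring is a $\Gamma$-space $R$ with unit $1\in R[1]$ (image of the unit map $\eta$) and associative unital multiplication given by natural maps $R(K)\wedge R(L)\to R(K\wedge L)$, $p\wedge q\mapsto pq$; it is discrete if all $R(K)$ are sets; $0\in R[1]$ denotes the basepoint. For $x\in R[2]$, $x^k\in R[2^k]$ is the $k$-fold product. Maps: $p^n_i:[n]\to[n-1]$, $p^n_i(j)=j$ ($j<i$), $p^n_i(i)=0$, $p^n_i(j)=j-1$ ($j>i$); for $1\le i<j\le n$ and $1\le k\le n-1$, $s^n_{i,j,k}:[n]\to[n-1]$ sends $0\mapsto0$, $i,j\mapsto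 k$, and the remaining elements order-preservingly and bijectively onto $\{1,\dots,n-1\}\setminus\{k\}$; $d^n_j:[n-1]\to[n]$ is the order-preserving injection missing $j$. $H\mathbb{Z}$ (resp. $H\mathbb{N}$) is the $\Gamma$-ring with $H\mathbb{Z}(K)$ the reduced free abelian group (resp. free commutative monoid) on $K$, pointed maps acting by summing coefficients along fibres, unit the inclusion of generators, multiplication $(\sum a_k k)(\sum b_l l)=\sum a_kb_l (k\wedge l)$. $1_n=(1,\dots,1)\in H\mathbb N[n]$ and $\pm1_n=(1,-1)^n\in H\mathbb{Z}[2^n]$. For $k\ge1$, split $\{1,\dots,2^k\}=A_+\sqcup A_-$ where $i\in A_+$ iff the binary expansion of $i-1$ has an even number of digits $1$ (so $\pm1_k$ has entry $1$ on $A_+$ and $-1$ on $A_-$). The special action of $\Sigma_{2^{k-1}}\times\Sigma_{2^{k-1}}$ on $F[2^k]$ is the action of the group of permutations of $\{1,\dots,2^k\}$ preserving $A_+$ and $A_-$. Let $\sigma$ be the nontrivial element of $\Sigma_2$. A formal sum law in $R$ is $w\in R[2]$ with $p^2_1(w)=p^2_2(w)=1$ and $w^k$ fixed by $\Sigma_{2^k}$ for all $k\ge1$. A formal difference law in $R$ is $r\in R[2]$ such that: (1) $p^2_2(r)=1$ and $s^2_{1,2,1}(r)=0$; (2) $p^2_1(r)\,r=r\,p^2_1(r)=\sigma(r)$ in $R[2]$; (3) for every $k\ge1$, $r^k$ is fixed under the special action of $\Sigma_{2^{k-1}}\times\Sigma_{2^{k-1}}$; (4) for every $k\ge1$, all $1\le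 i<j\le 2^k$ with one of $i,j$ in $A_+$ and the other in $A_-$, and all $1\le l\le 2^k-1$: $s^{2^k}_{i,j,l}(r^k)=d^{2^k-1}_l\,p^{2^k-1}_i\,p^{2^k}_j(r^k)$. *)

theory Defs
  imports Main
begin

text \<open>The pointed set [n] = {0,...,n} is encoded by the natural number n; a pointed
map [n] -> [m] is a function nat => nat with f 0 = 0 and f i <= m for i <= n
(values outside [n] are irrelevant; all structure maps below are required to
depend only on the values on [n]).\<close>

definition pmap :: "nat \<Rightarrow> nat \<Rightarrow> (nat \<Rightarrow> nat) \<Rightarrow> bool" where
  "pmap n m f \<longleftrightarrow> f 0 = 0 \<and> (\<forall>i\<le>n. f i \<le> m)"

text \<open>Morphisms [p] -> [q] of the simplex category (order preserving maps).\<close>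
definition dmap :: "nat \<Rightarrow> nat \<Rightarrow> (nat \<Rightarrow> nat) \<Rightarrow> bool" where
  "dmap p q \<theta> \<longleftrightarrow> (\<forall>i\<le>p. \<theta> i \<le> q) \<and> (\<forall>i j. i \<le> j \<and> j \<le> p \<longrightarrow> \<theta> i \<le> \<theta> j)"

text \<open>Identification [n] smash [m] = [nm], i smash j |-> (j-1)n+i.\<close>
definition smash :: "nat \<Rightarrow> nat \<Rightarrow> nat \<Rightarrow> nat" where
  "smash n i j = (if i = 0 \<or> j = 0 then 0 else (j - 1) * n + i)"

text \<open>The smash product f smash g : [n] smash [m] -> [n'] smash [m'] under these identifications.\<close>
definition smash_map :: "nat \<Rightarrow> nat \<Rightarrow> nat \<Rightarrow> (nat \<Rightarrow> nat) \<Rightarrow> (nat \<Rightarrow> nat) \<Rightarrow> nat \<Rightarrow> nat" where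
  "smash_map n m n' f g = (\<lambda>k. if 1 \<le> k \<and> k \<le> n * m
      then smash n' (f ((k - 1) mod n + 1)) (g ((k - 1) div n + 1)) else 0)"

text \<open>A Gamma-ring with simplices of type 'a:
  cells R n q     = the q-simplices of the pointed simplicial set R[n];
  sop R n q p th  = the simplicial operator th^* : R[n]_q -> R[n]_p for th : [p] -> [q] in Delta;
  base R n q      = the basepoint q-simplex of R[n];
  gmap R n m f q  = R(f) : R[n]_q -> R[m]_q for a pointed map f : [n] -> [m];
  mult R n m q    = multiplication R[n]_q x R[m]_q -> R[nm]_q;
  one R           = the unit 1 in R[1]_0.\<close>
record 'a gamma_ring =
  cells :: "nat \<Rightarrow> nat \<Rightarrow> 'a set"
  sop :: "nat \<Rightarrow> nat \<Rightarrow> nat \<Rightarrow> (nat \<Rightarrow> nat) \<Rightarrow> 'a \<Rightarrow> 'a"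
  base :: "nat \<Rightarrow> nat \<Rightarrow> 'a"
  gmap :: "nat \<Rightarrow> nat \<Rightarrow> (nat \<Rightarrow> nat) \<Rightarrow> nat \<Rightarrow> 'a \<Rightarrow> 'a"
  mult :: "nat \<Rightarrow> nat \<Rightarrow> nat \<Rightarrow> 'a \<Rightarrow> 'a \<Rightarrow> 'a"
  one :: 'a

text \<open>Each R[n] is a pointed simplicial set (a functor Delta^op -> pointed sets).\<close>
definition simplicial_sets :: "'a gamma_ring \<Rightarrow> bool" where
  "simplicial_sets R \<longleftrightarrow>
     (\<forall>n q. base R n q \<in> cells R n q)
   \<and> (\<forall>n q p \<theta> x. dmap p q \<theta> \<and> x \<in> cells R n q \<longrightarrow> sop R n q p \<theta> x \<in> cells R n p)
   \<and> (\<forall>n q x. x \<in> cells R n q \<longrightarrow> sop R n q q id x = x)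
   \<and> (\<forall>n q p u \<theta> \<zeta> x. dmap p q \<theta> \<and> dmap u p \<zeta> \<and> x \<in> cells R n q \<longrightarrow>
        sop R n p u \<zeta> (sop R n q p \<theta> x) = sop R n q u (\<theta> \<circ> \<zeta>) x)
   \<and> (\<forall>n q p \<theta> \<theta>' x. (\<forall>i\<le>p. \<theta> i = \<theta>' i) \<longrightarrow> sop R n q p \<theta> x = sop R n q p \<theta>' x)
   \<and> (\<forall>n q p \<theta>. dmap p q \<theta> \<longrightarrow> sop R n q p \<theta> (base R n q) = base R n p)"

text \<open>R is a Gamma-space: functorial in pointed maps, by maps of pointed simplicial sets,
with R[0] a point.\<close>
definition gamma_space :: "'a gamma_ring \<Rightarrow> bool" where
  "gamma_space R \<longleftrightarrow> simplicial_sets R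
   \<and> (\<forall>n m f q x. pmap n m f \<and> x \<in> cells R n q \<longrightarrow> gmap R n m f q x \<in> cells R m q)
   \<and> (\<forall>n q x. x \<in> cells R n q \<longrightarrow> gmap R n n id q x = x)
   \<and> (\<forall>n m k f g q x. pmap n m f \<and> pmap m k g \<and> x \<in> cells R n q \<longrightarrow>
        gmap R m k g q (gmap R n m f q x) = gmap R n k (g \<circ> f) q x)
   \<and> (\<forall>n m f f' q x. (\<forall>i\<le>n. f i = f' i) \<longrightarrow> gmap R n m f q x = gmap R n m f' q x)
   \<and> (\<forall>n m f q. pmap n m f \<longrightarrow> gmap R n m f q (base R n q) = base R m q)
   \<and> (\<forall>n m f q p \<theta> x. pmap n m f \<and> dmap p q \<theta> \<and> x \<in> cells R n q \<longrightarrow>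
        gmap R n m f p (sop R n q p \<theta> x) = sop R m q p \<theta> (gmap R n m f q x))
   \<and> (\<forall>q. cells R 0 q = {base R 0 q})"

text \<open>The unit 1 in R[1]_q (degeneracy of the vertex 1).\<close>
definition one_at :: "'a gamma_ring \<Rightarrow> nat \<Rightarrow> 'a" where
  "one_at R q = sop R 1 0 q (\<lambda>_. 0) (one R)"

definition gamma_ring :: "'a gamma_ring \<Rightarrow> bool" where
  "gamma_ring R \<longleftrightarrow> gamma_space R
   \<and> one R \<in> cells R 1 0
   \<and> (\<forall>n m q x y. x \<in> cells R n q \<and> y \<in> cells R m q \<longrightarrow> mult R n m q x y \<in> cells R (n * m) q)
   \<and> (\<forall>n m q y. y \<in> cells R m q \<longrightarrow> mult R n m q (base R n q) y = base R (n * m) q)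
   \<and> (\<forall>n m q x. x \<in> cells R n q \<longrightarrow> mult R n m q x (base R m q) = base R (n * m) q)
   \<and> (\<forall>n m q p \<theta> x y. dmap p q \<theta> \<and> x \<in> cells R n q \<and> y \<in> cells R m q \<longrightarrow>
        sop R (n * m) q p \<theta> (mult R n m q x y) = mult R n m p (sop R n q p \<theta> x) (sop R m q p \<theta> y))
   \<and> (\<forall>n m n' m' f g q x y. pmap n n' f \<and> pmap m m' g \<and> x \<in> cells R n q \<and> y \<in> cells R m q \<longrightarrow>
        gmap R (n * m) (n' * m') (smash_map n m n' f g) q (mult R n m q x y)
          = mult R n' m' q (gmap R n n' f q x) (gmap R m m' g q y))
   \<and> (\<forall>n m k q x y z. x \<in> cells R n q \<and> y \<in> cells R m q \<and> z \<in> cells R k q \<longrightarrow>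
        mult R (n * m) k q (mult R n m q x y) z = mult R n (m * k) q x (mult R m k q y z))
   \<and> (\<forall>n q x. x \<in> cells R n q \<longrightarrow> mult R 1 n q (one_at R q) x = x \<and> mult R n 1 q x (one_at R q) = x)"

text \<open>Discrete: every R[n] is a constant simplicial set (all simplicial operators are
bijections; equivalently the degeneracy R[n]_0 -> R[n]_q is bijective for all q).\<close>
definition discrete :: "'a gamma_ring \<Rightarrow> bool" where
  "discrete R \<longleftrightarrow> (\<forall>n q. bij_betw (sop R n 0 q (\<lambda>_. 0)) (cells R n 0) (cells R n q))"

primrec rpow :: "'a gamma_ring \<Rightarrow> 'a \<Rightarrow> nat \<Rightarrow> 'a" where
  "rpow R x 0 = one R"
| "rpow R x (Suc k) = mult R (2 ^ k) 2 0 (rpow R x k) x"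

definition pp :: "nat \<Rightarrow> nat \<Rightarrow> nat \<Rightarrow> nat" where
  "pp n i = (\<lambda>j. if j < i then j else if j = i then 0 else j - 1)"

definition ss :: "nat \<Rightarrow> nat \<Rightarrow> nat \<Rightarrow> nat \<Rightarrow> nat \<Rightarrow> nat" where
  "ss n i j k = (\<lambda>l. if l = 0 then 0 else if l = i \<or> l = j then k else
      (let r = l - (if i < l then 1 else 0) - (if j < l then 1 else 0)
       in if r < k then r else r + 1))"

definition dd :: "nat \<Rightarrow> nat \<Rightarrow> nat \<Rightarrow> nat" where
  "dd n j = (\<lambda>l. if l < j then l else l + 1)"

definition swap2 :: "nat \<Rightarrow> nat" where
  "swap2 = (\<lambda>l. if l = 1 then 2 else if l = 2 then 1 else l)"

text \<open>Permutations of {1..n}, extended by 0 |-> 0 (the Sigma_n action).\<close>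
definition perm_of :: "nat \<Rightarrow> (nat \<Rightarrow> nat) \<Rightarrow> bool" where
  "perm_of n \<pi> \<longleftrightarrow> \<pi> 0 = 0 \<and> bij_betw \<pi> {1..n} {1..n}"

fun bitcount :: "nat \<Rightarrow> nat" where
  "bitcount n = (if n = 0 then 0 else n mod 2 + bitcount (n div 2))"

definition Aplus :: "nat \<Rightarrow> nat set" where
  "Aplus k = {i \<in> {1..2 ^ k}. even (bitcount (i - 1))}"

definition Aminus :: "nat \<Rightarrow> nat set" where
  "Aminus k = {i \<in> {1..2 ^ k}. odd (bitcount (i - 1))}"

definition special_perm :: "nat \<Rightarrow> (nat \<Rightarrow> nat) \<Rightarrow> bool" where
  "special_perm k \<pi> \<longleftrightarrow> perm_of (2 ^ k) \<pi> \<and> \<pi> ` Aplus k = Aplus k \<and> \<pi> ` Aminus k = Aminus k"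

definition formal_sum_law :: "'a gamma_ring \<Rightarrow> 'a \<Rightarrow> bool" where
  "formal_sum_law R w \<longleftrightarrow> w \<in> cells R 2 0
   \<and> gmap R 2 1 (pp 2 1) 0 w = one R \<and> gmap R 2 1 (pp 2 2) 0 w = one R
   \<and> (\<forall>k\<ge>1. \<forall>\<pi>. perm_of (2 ^ k) \<pi> \<longrightarrow> gmap R (2 ^ k) (2 ^ k) \<pi> 0 (rpow R w k) = rpow R w k)"

definition formal_difference_law :: "'a gamma_ring \<Rightarrow> 'a \<Rightarrow> bool" where
  "formal_difference_law R r \<longleftrightarrow> r \<in> cells R 2 0
   \<and> gmap R 2 1 (pp 2 2) 0 r = one R \<and> gmap R 2 1 (ss 2 1 2 1) 0 r = base R 1 0
   \<and> mult R 1 2 0 (gmap R 2 1 (pp 2 1) 0 r) r = gmap R 2 2 swap2 0 r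
   \<and> mult R 2 1 0 r (gmap R 2 1 (pp 2 1) 0 r) = gmap R 2 2 swap2 0 r
   \<and> (\<forall>k\<ge>1. \<forall>\<pi>. special_perm k \<pi> \<longrightarrow> gmap R (2 ^ k) (2 ^ k) \<pi> 0 (rpow R r k) = rpow R r k)
   \<and> (\<forall>k\<ge>1. \<forall>i j l. 1 \<le> i \<and> i < j \<and> j \<le> 2 ^ k
        \<and> ((i \<in> Aplus k \<and> j \<in> Aminus k) \<or> (i \<in> Aminus k \<and> j \<in> Aplus k))
        \<and> 1 \<le> l \<and> l \<le> 2 ^ k - 1 \<longrightarrow>
        gmap R (2 ^ k) (2 ^ k - 1) (ss (2 ^ k) i j l) 0 (rpow R r k)
        = gmap R (2 ^ k - 2) (2 ^ k - 1) (dd (2 ^ k - 1) l) 0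
            (gmap R (2 ^ k - 1) (2 ^ k - 2) (pp (2 ^ k - 1) i) 0
              (gmap R (2 ^ k) (2 ^ k - 1) (pp (2 ^ k) j) 0 (rpow R r k))))"

text \<open>H C[n] for C = nat (HN) or int (HZ): functions {1..n} -> C, encoded as
nat => C vanishing at 0 and above n.\<close>
definition hcarrier :: "nat \<Rightarrow> (nat \<Rightarrow> 'c::zero) set" where
  "hcarrier n = {x. x 0 = 0 \<and> (\<forall>i>n. x i = 0)}"

definition hmap :: "nat \<Rightarrow> nat \<Rightarrow> (nat \<Rightarrow> nat) \<Rightarrow> (nat \<Rightarrow> 'c::comm_monoid_add) \<Rightarrow> nat \<Rightarrow> 'c" where
  "hmap n m f x = (\<lambda>j. if 1 \<le> j \<and> j \<le> m then (\<Sum>i\<in>{i\<in>{1..n}. f i = j}. x i) else 0)"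

definition hmult :: "nat \<Rightarrow> nat \<Rightarrow> (nat \<Rightarrow> 'c::semiring_0) \<Rightarrow> (nat \<Rightarrow> 'c) \<Rightarrow> nat \<Rightarrow> 'c" where
  "hmult n m x y = (\<lambda>k. if 1 \<le> k \<and> k \<le> n * m then x ((k - 1) mod n + 1) * y ((k - 1) div n + 1) else 0)"

definition hunit :: "nat \<Rightarrow> 'c::{zero,one}" where
  "hunit = (\<lambda>i. if i = 1 then 1 else 0)"

definition ones :: "nat \<Rightarrow> nat \<Rightarrow> nat" where
  "ones n = (\<lambda>i. if 1 \<le> i \<and> i \<le> n then 1 else 0)"

text \<open>pm1 n = (1,-1)^n in HZ[2^n].\<close>
primrec pm1 :: "nat \<Rightarrow> nat \<Rightarrow> int" where
  "pm1 0 = hunit"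
| "pm1 (Suc k) = hmult (2 ^ k) 2 (pm1 k) (\<lambda>i. if i = 1 then 1 else if i = 2 then -1 else 0)"

text \<open>A map of Gamma-rings H C -> R into a discrete R, given on vertices (for discrete
R and the discrete H C, a map of Gamma-spaces is the same as a family of maps on
vertices): natural, pointed, unital and multiplicative.\<close>
definition hring_map :: "'a gamma_ring \<Rightarrow> (nat \<Rightarrow> (nat \<Rightarrow> 'c::comm_semiring_1) \<Rightarrow> 'a) \<Rightarrow> bool" where
  "hring_map R \<phi> \<longleftrightarrow>
     (\<forall>n x. x \<in> hcarrier n \<longrightarrow> \<phi> n x \<in> cells R n 0)
   \<and> (\<forall>n m f x. pmap n m f \<and> x \<in> hcarrier n \<longrightarrow> \<phi> m (hmap n m f x) = gmap R n m f 0 (\<phi> n x))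
   \<and> (\<forall>n. \<phi> n (\<lambda>_. 0) = base R n 0)
   \<and> \<phi> 1 hunit = one R
   \<and> (\<forall>n m x y. x \<in> hcarrier n \<and> y \<in> hcarrier m \<longrightarrow>
        \<phi> (n * m) (hmult n m x y) = mult R n m 0 (\<phi> n x) (\<phi> m y))"

end

theory Submission
  imports Defs
begin

text \<open>
  Let r be a formal difference law in a Gamma-ring R and let a = p_1(r) in R[1].
  Restricting the relation a r = sigma(r) along p_1 gives a a = p_2(r) = 1.
  The candidate sum law is w = kappa(r^2), where kappa = p_2 p_2 : [4] -> [2] keeps
  the entries 1 and 4 of r^2 = r r (the two "diagonal" entries, which lie in A_+)
  and kills the two entries 2, 3 (which lie in A_-).  Its projections are a a = 1
  and 1 1 = 1.  By naturality of the multiplication, w^k = kappa^k(r^(2k)) for the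
  k-fold smash power kappa^k : [4^k] -> [2^k]; the points of [4^k] not sent to 0
  are exactly the points 1 + double_bits m (binary digits of m doubled), all in A_+.
  Hence every permutation pi of [2^k] lifts to a permutation pi' of [4^k] that
  preserves A_+ and A_- and satisfies pi kappa^k = kappa^k pi'; invariance of
  r^(2k) under pi' gives invariance of w^k under pi, so w is a formal sum law.
  Finally, a multiplicative map HN -> R is determined by its value on 1_2, since
  every element of HN[n] is the image of some 1_(2^K) (the layout lemma); the
  composite HN -> HZ -> R sends 1_2 = kappa(pm1 2) to kappa(r^2) = w.
\<close>

section \<open>Doubling binary digits\<close>

declare bitcount.simps[simp del]

lemma bitcount_eq: "bitcount n = n mod 2 + bitcount (n div 2)"
  by (cases "n = 0") (simp_all add: bitcount.simps[of n] bitcount.simps[of 0])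

text \<open>double_bits m replaces each binary digit 1 of m by the base-4 digit 3, i.e.
  by the pair of binary digits 11; it thus doubles the number of digits 1.\<close>
fun double_bits :: "nat \<Rightarrow> nat" where
  "double_bits m = (if m = 0 then 0 else 3 * (m mod 2) + 4 * double_bits (m div 2))"
declare double_bits.simps[simp del]

lemma double_bits_eq: "double_bits m = 3 * (m mod 2) + 4 * double_bits (m div 2)"
  by (cases "m = 0") (simp_all add: double_bits.simps[of m] double_bits.simps[of 0])

lemma bitcount_double_bits: "bitcount (double_bits m) = 2 * bitcount m"
proof (induction m rule: less_induct)
  case (less m)
  show ?case
  proof (cases "m = 0")
    case True
    then show ?thesis by (simp add: double_bits.simps bitcount.simps)
  next
    case False
    define q where "q = double_bits (m div 2)"
    have IH: "bitcount q = 2 * bitcount (m div 2)"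
      using less False unfolding q_def by simp
    have "bitcount (3 * (m mod 2) + 4 * q) = 2 * (m mod 2) + bitcount q"
    proof (cases "even m")
      case True
      then show ?thesis using bitcount_eq[of "4 * q"] bitcount_eq[of "2 * q"] by simp
    next
      case False
      have "(3 + 4 * q) div 2 = 1 + 2 * q" "(3 + 4 * q) mod 2 = 1" "(1 + 2 * q) div 2 = q"
        by presburger+
      then show ?thesis using False bitcount_eq[of "3 + 4 * q"] bitcount_eq[of "1 + 2 * q"]
        by (simp add: odd_iff_mod_2_eq_one)
    qed
    then show ?thesis using IH double_bits_eq[of m] bitcount_eq[of m] unfolding q_def by simp
  qed
qed

section \<open>The contraction kappa : [4] -> [2] and its smash powers\<close>

definition kappa :: "nat \<Rightarrow> nat" where
  "kappa = pp 3 2 \<circ> pp 4 2"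

lemma kappa_values: "kappa 1 = 1" "kappa 2 = 0" "kappa 3 = 0" "kappa 4 = 2"
  by (simp_all add: kappa_def pp_def)

lemma kappa_digit: "d < 4 \<Longrightarrow> kappa (d + 1) = (if d = 0 then 1 else if d = 3 then 2 else 0)"
  by (auto simp: kappa_def pp_def dest!: less_Suc_eq[THEN iffD1])

text \<open>kappa_pow k : [4^k] -> [2^k] is the k-fold smash power of kappa, under the
  identifications [4] smash [4^k] = [4^(k+1)] and [2] smash [2^k] = [2^(k+1)].\<close>
primrec kappa_pow :: "nat \<Rightarrow> nat \<Rightarrow> nat" where
  "kappa_pow 0 = id"
| "kappa_pow (Suc k) = smash_map 4 (2 ^ (2 * k)) 2 kappa (kappa_pow k)"

lemma pow4: "(2::nat) ^ (2 * Suc k) = 4 * 2 ^ (2 * k)"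
  by (simp add: power_add)

lemma kappa_pow_Suc:
  assumes "1 \<le> t" "t \<le> 4 * 2 ^ (2 * k)"
  shows "kappa_pow (Suc k) t = smash 2 (kappa ((t - 1) mod 4 + 1)) (kappa_pow k ((t - 1) div 4 + 1))"
  using assms by (simp add: smash_map_def)

lemma kappa_pow_zero: "kappa_pow k 0 = 0"
  by (cases k) (simp_all add: smash_map_def)

lemma div4_bound: "1 \<le> t \<Longrightarrow> t \<le> 4 * N \<Longrightarrow> 1 \<le> (t - 1) div 4 + 1 \<and> (t - 1) div 4 + 1 \<le> (N::nat)"
  by (simp add: Suc_leI div_less_iff_less_mult less_le_trans)

lemma kappa_pow_bound: "t \<le> 2 ^ (2 * k) \<Longrightarrow> kappa_pow k t \<le> 2 ^ k"
proof (induction k arbitrary: t)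
  case 0
  then show ?case by simp
next
  case (Suc k)
  show ?case
  proof (cases "t = 0")
    case True
    then show ?thesis by (simp add: smash_map_def)
  next
    case False
    define d q where "d = (t - 1) mod 4" and "q = (t - 1) div 4"
    have t: "1 \<le> t" "t \<le> 4 * 2 ^ (2 * k)" using False Suc.prems pow4 by auto
    have "kappa (d + 1) \<le> 2" using kappa_digit[of d] unfolding d_def by simp
    moreover have "kappa_pow k (q + 1) \<le> 2 ^ k"
      using Suc.IH div4_bound[OF t] unfolding q_def by blast
    ultimately have "smash 2 (kappa (d + 1)) (kappa_pow k (q + 1)) \<le> 2 * 2 ^ k"
      by (cases "kappa_pow k (q + 1)") (auto simp: smash_def)
    then show ?thesis using kappa_pow_Suc[OF t] unfolding d_def q_def by simp
  qed
qed

lemma pmap_kappa_pow: "pmap (2 ^ (2 * k)) (2 ^ k) (kappa_pow k)"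
  unfolding pmap_def using kappa_pow_zero kappa_pow_bound by blast

lemma kappa_pow_support:
  "1 \<le> t \<Longrightarrow> t \<le> 2 ^ (2 * k) \<Longrightarrow> kappa_pow k t \<noteq> 0 \<Longrightarrow>
   t = double_bits (kappa_pow k t - 1) + 1"
proof (induction k arbitrary: t)
  case 0
  then show ?case by (simp add: double_bits.simps)
next
  case (Suc k)
  define d q where "d = (t - 1) mod 4" and "q = (t - 1) div 4"
  have t: "1 \<le> t" "t \<le> 4 * 2 ^ (2 * k)" using Suc.prems pow4 by auto
  have val: "kappa_pow (Suc k) t = smash 2 (kappa (d + 1)) (kappa_pow k (q + 1))"
    using kappa_pow_Suc[OF t] unfolding d_def q_def by simp
  have nz: "kappa (d + 1) \<noteq> 0" "kappa_pow k (q + 1) \<noteq> 0"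
    using Suc.prems(3) unfolding val smash_def by (auto split: if_splits)
  define M where "M = kappa_pow k (q + 1) - 1"
  have q: "q = double_bits M"
    using Suc.IH[of "q + 1"] div4_bound[OF t] nz(2) unfolding q_def M_def by simp
  have d: "d = 0 \<or> d = 3" and d4: "d < 4"
    using nz(1) kappa_digit[of d] unfolding d_def by (auto split: if_splits)
  have "kappa_pow (Suc k) t - 1 = 2 * M + d div 3"
    using val nz d kappa_digit[OF d4] unfolding M_def smash_def by auto
  then have "double_bits (kappa_pow (Suc k) t - 1) = d + 4 * q"
    using d double_bits_eq[of "2 * M + d div 3"] q by auto
  then show ?case using t(1) unfolding d_def q_def by simp
qed

lemma kappa_pow_double_bits:
  "m < 2 ^ k \<Longrightarrow> double_bits m + 1 \<le> 2 ^ (2 * k) \<and> kappa_pow k (double_bits m + 1) = m + 1"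
proof (induction k arbitrary: m)
  case 0
  then show ?case by (simp add: double_bits.simps)
next
  case (Suc k)
  have IH: "double_bits (m div 2) + 1 \<le> 2 ^ (2 * k)" "kappa_pow k (double_bits (m div 2) + 1) = m div 2 + 1"
    using Suc by auto
  have em: "double_bits m = 3 * (m mod 2) + 4 * double_bits (m div 2)" by (rule double_bits_eq)
  have b: "m mod 2 = 0 \<or> m mod 2 = 1" by auto
  have le: "double_bits m + 1 \<le> 4 * 2 ^ (2 * k)" using em IH(1) b by auto
  have "double_bits m mod 4 = 3 * (m mod 2)" "double_bits m div 4 = double_bits (m div 2)"
    using em b by auto
  moreover have "kappa (3 * (m mod 2) + 1) = m mod 2 + 1" using b kappa_digit by auto
  ultimately have "kappa_pow (Suc k) (double_bits m + 1) = smash 2 (m mod 2 + 1) (m div 2 + 1)"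
    using kappa_pow_Suc[of "double_bits m + 1" k] le IH(2) by simp
  also have "\<dots> = m + 1" by (simp add: smash_def)
  finally show ?case using le pow4 by simp
qed

lemma Aplus_double_bits:
  assumes t: "t \<in> {1..2 ^ (2 * k)}" and nz: "kappa_pow k t \<noteq> 0"
  shows "t \<in> Aplus (2 * k)"
proof -
  have "t - 1 = double_bits (kappa_pow k t - 1)" using kappa_pow_support[of t k] t nz by simp
  then have "even (bitcount (t - 1))" by (simp add: bitcount_double_bits)
  then show ?thesis using t unfolding Aplus_def by simp
qed

section \<open>Lifting permutations along kappa_pow\<close>

definition lift_perm :: "nat \<Rightarrow> (nat \<Rightarrow> nat) \<Rightarrow> nat \<Rightarrow> nat" where
  "lift_perm k \<pi> t =
     (if kappa_pow k t \<noteq> 0 then double_bits (\<pi> (kappa_pow k t) - 1) + 1 else t)"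

lemma perm_of_maps: "perm_of n \<pi> \<Longrightarrow> i \<in> {1..n} \<Longrightarrow> \<pi> i \<in> {1..n}"
  unfolding perm_of_def using bij_betwE by blast

lemma lift_perm_commutes:
  assumes p: "perm_of (2 ^ k) \<pi>" and t: "t \<le> 2 ^ (2 * k)"
  shows "kappa_pow k (lift_perm k \<pi> t) = \<pi> (kappa_pow k t)"
    and "t \<ge> 1 \<Longrightarrow> lift_perm k \<pi> t \<in> {1..2 ^ (2 * k)}"
proof -
  have "kappa_pow k (lift_perm k \<pi> t) = \<pi> (kappa_pow k t) \<and> (t \<ge> 1 \<longrightarrow> lift_perm k \<pi> t \<in> {1..2 ^ (2 * k)})"
  proof (cases "kappa_pow k t = 0")
    case True
    then show ?thesis using p t unfolding lift_perm_def perm_of_def by simp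
  next
    case False
    then have "kappa_pow k t \<in> {1..2 ^ k}" using kappa_pow_bound[OF t] by simp
    then have "\<pi> (kappa_pow k t) \<in> {1..2 ^ k}" by (rule perm_of_maps[OF p])
    then show ?thesis
      using kappa_pow_double_bits[of "\<pi> (kappa_pow k t) - 1" k] False
      unfolding lift_perm_def by auto
  qed
  then show "kappa_pow k (lift_perm k \<pi> t) = \<pi> (kappa_pow k t)"
    and "t \<ge> 1 \<Longrightarrow> lift_perm k \<pi> t \<in> {1..2 ^ (2 * k)}" by blast+
qed

text \<open>The lift is injective: points with nonzero image are recovered from that image,
  the others are fixed and not hit by moved points.\<close>
lemma lift_perm_inj:
  assumes p: "perm_of (2 ^ k) \<pi>"
  shows "inj_on (lift_perm k \<pi>) {1..2 ^ (2 * k)}"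
proof (rule inj_onI)
  fix s t assume s: "s \<in> {1..2 ^ (2 * k)}" and t: "t \<in> {1..2 ^ (2 * k)}"
    and eq: "lift_perm k \<pi> s = lift_perm k \<pi> t"
  have \<pi>0: "\<pi> 0 = 0" using p unfolding perm_of_def by simp
  have inj: "inj_on \<pi> {1..2 ^ k}" using p unfolding perm_of_def bij_betw_def by simp
  have same: "\<pi> (kappa_pow k s) = \<pi> (kappa_pow k t)"
    using lift_perm_commutes(1)[OF p] s t eq by (metis atLeastAtMost_iff)
  show "s = t"
  proof (cases "kappa_pow k s = 0 \<or> kappa_pow k t = 0")
    case True
    have "\<pi> i \<noteq> 0" if "i \<noteq> 0" "i \<le> 2 ^ k" for i using perm_of_maps[OF p, of i] that by auto
    then have "kappa_pow k s = 0 \<and> kappa_pow k t = 0"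
      using True same \<pi>0 kappa_pow_bound s t by (metis atLeastAtMost_iff)
    then show ?thesis using eq unfolding lift_perm_def by simp
  next
    case False
    then have "kappa_pow k s = kappa_pow k t"
      using inj same kappa_pow_bound s t by (auto simp: inj_on_def)
    then show ?thesis using kappa_pow_support s t False by (metis atLeastAtMost_iff)
  qed
qed

text \<open>The lift is a permutation preserving A_+ and A_- (it fixes A_- pointwise).\<close>
lemma lift_perm_special:
  assumes p: "perm_of (2 ^ k) \<pi>"
  shows "special_perm (2 * k) (lift_perm k \<pi>)"
proof -
  let ?\<pi>' = "lift_perm k \<pi>" and ?N = "2 ^ (2 * k) :: nat"
  have Asub: "Aplus (2 * k) \<subseteq> {1..?N}" "Aminus (2 * k) \<subseteq> {1..?N}"
    unfolding Aplus_def Aminus_def by auto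
  have inj: "inj_on ?\<pi>' {1..?N}" by (rule lift_perm_inj[OF p])
  have onto: "?\<pi>' ` {1..?N} = {1..?N}"
    by (rule endo_inj_surj[OF _ _ inj]) (use lift_perm_commutes(2)[OF p] in auto)
  have fixes_Aminus: "?\<pi>' t = t" if "t \<in> Aminus (2 * k)" for t
  proof -
    have "kappa_pow k t = 0"
      using Aplus_double_bits[of t k] that Asub unfolding Aplus_def Aminus_def by blast
    then show ?thesis unfolding lift_perm_def by simp
  qed
  have "?\<pi>' t \<in> Aplus (2 * k)" if t: "t \<in> Aplus (2 * k)" for t
  proof (cases "kappa_pow k t = 0")
    case True
    then show ?thesis using t unfolding lift_perm_def by simp
  next
    case False
    have "t \<le> ?N" using t Asub by auto
    then have "?\<pi>' t \<in> {1..?N}" "kappa_pow k (?\<pi>' t) \<noteq> 0"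
      using lift_perm_commutes[OF p] t Asub False perm_of_maps[OF p, of "kappa_pow k t"]
        kappa_pow_bound[of t k] by auto
    then show ?thesis by (rule Aplus_double_bits)
  qed
  then have "?\<pi>' ` Aplus (2 * k) = Aplus (2 * k)"
    by (intro endo_inj_surj) (auto simp: Aplus_def intro: inj_on_subset[OF inj])
  moreover have "?\<pi>' ` Aminus (2 * k) = Aminus (2 * k)"
    using fixes_Aminus by (simp add: image_cong)
  moreover have "perm_of ?N ?\<pi>'"
    using inj onto kappa_pow_zero unfolding perm_of_def bij_betw_def lift_perm_def by simp
  ultimately show ?thesis unfolding special_perm_def by simp
qed

lemma nat_le2_cases: "(i::nat) \<le> 2 \<Longrightarrow> i = 0 \<or> i = 1 \<or> i = 2"
  and nat_le4_cases: "(i::nat) \<le> 4 \<Longrightarrow> i = 0 \<or> i = 1 \<or> i = 2 \<or> i = 3 \<or> i = 4"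
  by auto

lemma pmap_id: "pmap n n id"
  and pmap_pp21: "pmap 2 1 (pp 2 1)" and pmap_pp22: "pmap 2 1 (pp 2 2)"
  and pmap_pp42: "pmap 4 3 (pp 4 2)" and pmap_pp32: "pmap 3 2 (pp 3 2)"
  and pmap_swap2: "pmap 2 2 swap2"
  by (auto simp: pmap_def pp_def swap2_def)

lemma pmap_kappa: "pmap 4 2 kappa"
  by (auto simp: pmap_def kappa_def pp_def)

lemma pmap_perm:
  assumes p: "perm_of n \<pi>"
  shows "pmap n n \<pi>"
proof -
  have "\<pi> i \<le> n" if "i \<le> n" for i
    using p perm_of_maps[OF p, of i] that unfolding perm_of_def by (cases "i = 0") auto
  then show ?thesis using p unfolding pmap_def perm_of_def by simp
qed

text \<open>On each projection [2] -> [1], the map kappa followed by the projection is the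
  smash square of that projection; this computes the projections of w.\<close>
lemma kappa_smash_projection:
  assumes "i = 1 \<or> i = 2" and "t \<le> 4"
  shows "pp 2 i (kappa t) = smash_map 2 2 1 (pp 2 i) (pp 2 i) t"
  using assms(1) nat_le4_cases[OF assms(2)]
  by (elim disjE; simp add: smash_map_def smash_def pp_def kappa_def)

locale gring =
  fixes R :: "'a gamma_ring"
  assumes gamma_ring: "gamma_ring R"
begin

lemma gmap_cells: "pmap n m f \<Longrightarrow> x \<in> cells R n q \<Longrightarrow> gmap R n m f q x \<in> cells R m q"
  and gmap_id: "x \<in> cells R n q \<Longrightarrow> gmap R n n id q x = x"
  and gmap_comp: "pmap n m f \<Longrightarrow> pmap m k g \<Longrightarrow> x \<in> cells R n q \<Longrightarrow>
     gmap R m k g q (gmap R n m f q x) = gmap R n k (g \<circ> f) q x"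
  and gmap_cong: "(\<And>i. i \<le> n \<Longrightarrow> f i = f' i) \<Longrightarrow> gmap R n m f q x = gmap R n m f' q x"
  using gamma_ring unfolding gamma_ring_def gamma_space_def by auto

lemma one_cells: "one R \<in> cells R 1 0"
  and mult_cells: "x \<in> cells R n q \<Longrightarrow> y \<in> cells R m q \<Longrightarrow> mult R n m q x y \<in> cells R (n * m) q"
  and mult_natural: "pmap n n' f \<Longrightarrow> pmap m m' g \<Longrightarrow> x \<in> cells R n q \<Longrightarrow> y \<in> cells R m q \<Longrightarrow>
     gmap R (n * m) (n' * m') (smash_map n m n' f g) q (mult R n m q x y)
       = mult R n' m' q (gmap R n n' f q x) (gmap R m m' g q y)"
  and mult_assoc: "x \<in> cells R n q \<Longrightarrow> y \<in> cells R m q \<Longrightarrow> z \<in> cells R k q \<Longrightarrow>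
     mult R (n * m) k q (mult R n m q x y) z = mult R n (m * k) q x (mult R m k q y z)"
  using gamma_ring unfolding gamma_ring_def by auto

lemma one_at_0: "one_at R 0 = one R"
proof -
  have s: "simplicial_sets R" using gamma_ring unfolding gamma_ring_def gamma_space_def by auto
  have "sop R 1 0 0 (\<lambda>_. 0) (one R) = sop R 1 0 0 id (one R)"
    using s unfolding simplicial_sets_def by (metis id_apply le_zero_eq)
  also have "\<dots> = one R" using s one_cells unfolding simplicial_sets_def by blast
  finally show ?thesis unfolding one_at_def .
qed

lemma mult_one_left: "x \<in> cells R n 0 \<Longrightarrow> mult R 1 n 0 (one R) x = x"
  and mult_one_right: "x \<in> cells R n 0 \<Longrightarrow> mult R n 1 0 x (one R) = x"
  using gamma_ring one_at_0 unfolding gamma_ring_def by metis+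

lemma rpow_cells: "x \<in> cells R 2 0 \<Longrightarrow> rpow R x k \<in> cells R (2 ^ k) 0"
proof (induction k)
  case 0
  then show ?case using one_cells by simp
next
  case (Suc k)
  then have "mult R (2 ^ k) 2 0 (rpow R x k) x \<in> cells R (2 ^ k * 2) 0"
    using mult_cells by blast
  then show ?case by (simp add: mult.commute)
qed

lemma rpow_1: "x \<in> cells R 2 0 \<Longrightarrow> rpow R x 1 = x"
  using mult_one_left by simp

lemma rpow_Suc_left: "x \<in> cells R 2 0 \<Longrightarrow> rpow R x (Suc k) = mult R 2 (2 ^ k) 0 x (rpow R x k)"
proof (induction k)
  case 0
  then show ?case using mult_one_left mult_one_right by simp
next
  case (Suc k)
  have xk: "rpow R x k \<in> cells R (2 ^ k) 0" using rpow_cells Suc by blast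
  have "rpow R x (Suc (Suc k)) = mult R (2 * 2 ^ k) 2 0 (mult R 2 (2 ^ k) 0 x (rpow R x k)) x"
    using Suc by simp
  also have "\<dots> = mult R 2 (2 ^ k * 2) 0 x (mult R (2 ^ k) 2 0 (rpow R x k) x)"
    using mult_assoc[OF Suc.prems xk Suc.prems] by simp
  finally show ?case by (simp add: mult.commute)
qed

lemma rpow_2: "x \<in> cells R 2 0 \<Longrightarrow> rpow R x 2 = mult R 2 2 0 x x"
  using rpow_1[of x] by (simp add: numeral_2_eq_2)

lemma rpow_add_2:
  assumes x: "x \<in> cells R 2 0"
  shows "rpow R x (Suc (Suc k)) = mult R 4 (2 ^ k) 0 (rpow R x 2) (rpow R x k)"
proof -
  have xk: "rpow R x k \<in> cells R (2 ^ k) 0" using rpow_cells x by blast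
  have "rpow R x (Suc (Suc k)) = mult R 2 (2 * 2 ^ k) 0 x (mult R 2 (2 ^ k) 0 x (rpow R x k))"
    using rpow_Suc_left[OF x, of "Suc k"] rpow_Suc_left[OF x, of k] by simp
  also have "\<dots> = mult R (2 * 2) (2 ^ k) 0 (mult R 2 2 0 x x) (rpow R x k)"
    using mult_assoc[OF x x xk] by simp
  finally show ?thesis using rpow_2[OF x] by simp
qed

section \<open>From a formal difference law to a formal sum law\<close>

text \<open>If p_2(r) = 1 and p_1(r) r = sigma(r), then p_1(r) p_1(r) = 1: apply p_1 to the
  second factor.\<close>
lemma square_of_first_projection:
  assumes r: "r \<in> cells R 2 0" and p2: "gmap R 2 1 (pp 2 2) 0 r = one R"
    and swap: "mult R 1 2 0 (gmap R 2 1 (pp 2 1) 0 r) r = gmap R 2 2 swap2 0 r"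
  shows "mult R 1 1 0 (gmap R 2 1 (pp 2 1) 0 r) (gmap R 2 1 (pp 2 1) 0 r) = one R"
proof -
  let ?a = "gmap R 2 1 (pp 2 1) 0 r"
  have a: "?a \<in> cells R 1 0" using gmap_cells[OF pmap_pp21 r] .
  have "mult R 1 1 0 ?a ?a = mult R 1 1 0 (gmap R 1 1 id 0 ?a) (gmap R 2 1 (pp 2 1) 0 r)"
    using gmap_id[OF a] by simp
  also have "\<dots> = gmap R 2 1 (smash_map 1 2 1 id (pp 2 1)) 0 (mult R 1 2 0 ?a r)"
    using mult_natural[OF pmap_id pmap_pp21 a r] by simp
  also have "\<dots> = gmap R 2 1 (pp 2 1) 0 (mult R 1 2 0 ?a r)"
    by (rule gmap_cong, drule nat_le2_cases, elim disjE; simp add: smash_map_def smash_def pp_def)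
  also have "\<dots> = gmap R 2 1 (pp 2 1 \<circ> swap2) 0 r"
    unfolding swap using gmap_comp[OF pmap_swap2 pmap_pp21 r] .
  also have "\<dots> = gmap R 2 1 (pp 2 2) 0 r"
    by (rule gmap_cong, drule nat_le2_cases, elim disjE; simp add: swap2_def pp_def)
  finally show ?thesis using p2 by simp
qed

lemma rpow_kappa:
  assumes r: "r \<in> cells R 2 0"
  shows "rpow R (gmap R 4 2 kappa 0 (rpow R r 2)) k
       = gmap R (2 ^ (2 * k)) (2 ^ k) (kappa_pow k) 0 (rpow R r (2 * k))"
proof (induction k)
  case 0
  then show ?case using gmap_id[OF one_cells] by (simp add: id_def)
next
  case (Suc k)
  let ?w = "gmap R 4 2 kappa 0 (rpow R r 2)"
  have r2: "rpow R r 2 \<in> cells R 4 0" using rpow_cells[OF r, of 2] by simp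
  have w: "?w \<in> cells R 2 0" using gmap_cells[OF pmap_kappa r2] .
  have r2k: "rpow R r (2 * k) \<in> cells R (2 ^ (2 * k)) 0" using rpow_cells[OF r] .
  have "rpow R ?w (Suc k) = mult R 2 (2 ^ k) 0 ?w (rpow R ?w k)"
    by (rule rpow_Suc_left[OF w])
  also have "\<dots> = mult R 2 (2 ^ k) 0 ?w
                    (gmap R (2 ^ (2 * k)) (2 ^ k) (kappa_pow k) 0 (rpow R r (2 * k)))"
    unfolding Suc.IH ..
  also have "\<dots> = gmap R (4 * 2 ^ (2 * k)) (2 * 2 ^ k) (kappa_pow (Suc k)) 0
                    (mult R 4 (2 ^ (2 * k)) 0 (rpow R r 2) (rpow R r (2 * k)))"
    using mult_natural[OF pmap_kappa pmap_kappa_pow r2 r2k] by simp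
  also have "\<dots> = gmap R (4 * 2 ^ (2 * k)) (2 * 2 ^ k) (kappa_pow (Suc k)) 0
                    (rpow R r (Suc (Suc (2 * k))))"
    using rpow_add_2[OF r, of "2 * k"] by simp
  finally show ?case unfolding pow4 by simp
qed

lemma kappa_projection:
  assumes r: "r \<in> cells R 2 0" and i: "i = 1 \<or> i = 2"
  shows "gmap R 2 1 (pp 2 i) 0 (gmap R 4 2 kappa 0 (rpow R r 2))
       = mult R 1 1 0 (gmap R 2 1 (pp 2 i) 0 r) (gmap R 2 1 (pp 2 i) 0 r)"
proof -
  have pi: "pmap 2 1 (pp 2 i)" using i pmap_pp21 pmap_pp22 by blast
  have r2: "rpow R r 2 \<in> cells R 4 0" using rpow_cells[OF r, of 2] by simp
  have "gmap R 2 1 (pp 2 i) 0 (gmap R 4 2 kappa 0 (rpow R r 2))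
      = gmap R 4 1 (pp 2 i \<circ> kappa) 0 (rpow R r 2)"
    using gmap_comp[OF pmap_kappa pi r2] .
  also have "\<dots> = gmap R 4 1 (smash_map 2 2 1 (pp 2 i) (pp 2 i)) 0 (mult R 2 2 0 r r)"
    unfolding rpow_2[OF r] using kappa_smash_projection[OF i] by (intro gmap_cong) simp
  finally show ?thesis using mult_natural[OF pi pi r r] by simp
qed

text \<open>A permutation of [2^k] acts on kappa^k(r^(2k)) as its lift acts on r^(2k).\<close>
lemma kappa_pow_symmetric:
  assumes r: "r \<in> cells R 2 0" and p: "perm_of (2 ^ k) \<pi>"
    and special: "\<And>\<pi>'. special_perm (2 * k) \<pi>' \<Longrightarrow>
        gmap R (2 ^ (2 * k)) (2 ^ (2 * k)) \<pi>' 0 (rpow R r (2 * k)) = rpow R r (2 * k)"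
  shows "gmap R (2 ^ (2 * k)) (2 ^ k) (\<pi> \<circ> kappa_pow k) 0 (rpow R r (2 * k))
       = gmap R (2 ^ (2 * k)) (2 ^ k) (kappa_pow k) 0 (rpow R r (2 * k))"
proof -
  let ?\<pi>' = "lift_perm k \<pi>" and ?x = "rpow R r (2 * k)"
  have sp: "special_perm (2 * k) ?\<pi>'" by (rule lift_perm_special[OF p])
  have x: "?x \<in> cells R (2 ^ (2 * k)) 0" using rpow_cells[OF r] .
  have "gmap R (2 ^ (2 * k)) (2 ^ k) (\<pi> \<circ> kappa_pow k) 0 ?x
      = gmap R (2 ^ (2 * k)) (2 ^ k) (kappa_pow k \<circ> ?\<pi>') 0 ?x"
    by (rule gmap_cong) (simp add: lift_perm_commutes(1)[OF p])
  also have "\<dots> = gmap R (2 ^ (2 * k)) (2 ^ k) (kappa_pow k) 0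
                    (gmap R (2 ^ (2 * k)) (2 ^ (2 * k)) ?\<pi>' 0 ?x)"
    using sp pmap_perm gmap_comp[OF _ pmap_kappa_pow x] unfolding special_perm_def by metis
  finally show ?thesis using special[OF sp] by simp
qed

theorem formal_sum_law_of_difference_law:
  assumes F: "formal_difference_law R r"
  shows "formal_sum_law R (gmap R 4 2 kappa 0 (rpow R r 2))"
proof -
  let ?w = "gmap R 4 2 kappa 0 (rpow R r 2)"
  have r: "r \<in> cells R 2 0" and p2: "gmap R 2 1 (pp 2 2) 0 r = one R"
    and swap: "mult R 1 2 0 (gmap R 2 1 (pp 2 1) 0 r) r = gmap R 2 2 swap2 0 r"
    and special: "\<And>k \<pi>. k \<ge> 1 \<Longrightarrow> special_perm k \<pi> \<Longrightarrow>
        gmap R (2 ^ k) (2 ^ k) \<pi> 0 (rpow R r k) = rpow R r k"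
    using F unfolding formal_difference_law_def by blast+
  have w: "?w \<in> cells R 2 0" using gmap_cells[OF pmap_kappa, of "rpow R r 2"] rpow_cells[OF r, of 2] by simp
  have proj1: "gmap R 2 1 (pp 2 1) 0 ?w = one R"
    using kappa_projection[OF r] square_of_first_projection[OF r p2 swap] by simp
  have proj2: "gmap R 2 1 (pp 2 2) 0 ?w = one R"
    using kappa_projection[OF r] p2 mult_one_left[OF one_cells] by simp
  have "gmap R (2 ^ k) (2 ^ k) \<pi> 0 (rpow R ?w k) = rpow R ?w k"
    if k: "k \<ge> 1" and p: "perm_of (2 ^ k) \<pi>" for k \<pi>
    using kappa_pow_symmetric[OF r p special] k
      gmap_comp[OF pmap_kappa_pow pmap_perm[OF p] rpow_cells[OF r, of "2 * k"]]
    unfolding rpow_kappa[OF r] by simp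
  then show ?thesis unfolding formal_sum_law_def using w proj1 proj2 by blast
qed

end

section \<open>Multiplicative maps out of HN and HZ\<close>

lemma hmult_hcarrier: "hmult n m x y \<in> hcarrier (n * m)"
  unfolding hcarrier_def hmult_def by auto

lemma ones_hcarrier: "ones n \<in> hcarrier n"
  unfolding hcarrier_def ones_def by auto

lemma pm1_hcarrier: "pm1 k \<in> hcarrier (2 ^ k)"
proof (cases k)
  case 0
  then show ?thesis by (simp add: hcarrier_def hunit_def)
next
  case (Suc k')
  then show ?thesis using hmult_hcarrier[of "2 ^ k'" 2] by (simp add: mult.commute)
qed

lemma int_hcarrier: "x \<in> hcarrier n \<Longrightarrow> int \<circ> x \<in> hcarrier n"
  and int_hmap: "int \<circ> hmap n m f x = hmap n m f (int \<circ> x)"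
  and int_hmult: "int \<circ> hmult n m x y = hmult n m (int \<circ> x) (int \<circ> y)"
  and int_hunit: "int \<circ> hunit = hunit"
  by (auto simp: hcarrier_def hmap_def hmult_def hunit_def fun_eq_iff)

lemma ones_1: "ones 1 = hunit"
  unfolding ones_def hunit_def by (auto simp: fun_eq_iff)

lemma ones_mult_2:
  assumes n: "n \<ge> 1"
  shows "ones (n * 2) = hmult n 2 (ones n) (ones 2)"
proof -
  have "(t - 1) div n + 1 \<le> 2" if "1 \<le> t" "t \<le> n * 2" for t
  proof -
    have "t - 1 < n * 2" using that by simp
    then have "(t - 1) div n < 2" by (simp add: div_less_iff_less_mult n)
    then show ?thesis by simp
  qed
  moreover have "(t - 1) mod n + 1 \<le> n" for t
    using mod_less_divisor[of n "t - 1"] n by linarith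
  ultimately show ?thesis unfolding ones_def hmult_def by (auto simp: fun_eq_iff)
qed

text \<open>Given x in HN[n], layout n x sends the point l n + j of a large [B] to j if
  l < x j, and to the basepoint otherwise; its fibre over j has exactly x j points,
  so it pushes 1_B forward to x.\<close>
definition layout :: "nat \<Rightarrow> (nat \<Rightarrow> nat) \<Rightarrow> nat \<Rightarrow> nat" where
  "layout n x t =
     (if 1 \<le> t \<and> (t - 1) div n < x ((t - 1) mod n + 1) then (t - 1) mod n + 1 else 0)"

lemma layout_pmap: "n \<ge> 1 \<Longrightarrow> pmap B n (layout n x)"
  unfolding pmap_def layout_def using mod_less_divisor[of n] by (auto simp: Suc_leI)

lemma layout_fibre:
  assumes j: "1 \<le> j" "j \<le> n" and B: "n * sum x {1..n} \<le> B"
  shows "{t \<in> {1..B}. layout n x t = j} = (\<lambda>l. l * n + j) ` {..<x j}"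
proof
  show "{t \<in> {1..B}. layout n x t = j} \<subseteq> (\<lambda>l. l * n + j) ` {..<x j}"
  proof
    fix t assume "t \<in> {t \<in> {1..B}. layout n x t = j}"
    then have t: "1 \<le> t" "layout n x t = j" by auto
    then have c: "(t - 1) div n < x ((t - 1) mod n + 1)" "(t - 1) mod n + 1 = j"
      using j unfolding layout_def by (auto split: if_splits)
    have "t = ((t - 1) div n) * n + j" using div_mult_mod_eq[of "t - 1" n] c(2) t(1) by arith
    then show "t \<in> (\<lambda>l. l * n + j) ` {..<x j}" using c by auto
  qed
next
  show "(\<lambda>l. l * n + j) ` {..<x j} \<subseteq> {t \<in> {1..B}. layout n x t = j}"
  proof
    fix t assume "t \<in> (\<lambda>l. l * n + j) ` {..<x j}"
    then obtain l where l: "l < x j" "t = l * n + j" by auto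
    have "x j \<le> sum x {1..n}" using j by (intro member_le_sum) auto
    then have "Suc l * n \<le> n * sum x {1..n}"
      using l(1) by (metis Suc_leI le_trans mult.commute mult_le_mono2)
    then have tB: "t \<le> B" using l(2) j B by simp
    obtain d where d: "j = Suc d" "d < n" using j by (cases j) auto
    then have "t - 1 = d + l * n" using l(2) by simp
    then have "(t - 1) mod n = j - 1" "(t - 1) div n = l" using d by simp_all
    then have "layout n x t = j" unfolding layout_def using l j by auto
    then show "t \<in> {t \<in> {1..B}. layout n x t = j}" using tB l j by auto
  qed
qed

lemma hmap_layout:
  assumes x: "x \<in> hcarrier n" and n: "n \<ge> 1" and B: "n * sum x {1..n} \<le> B"
  shows "hmap B n (layout n x) (ones B) = x"
proof
  fix j
  show "hmap B n (layout n x) (ones B) j = x j"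
  proof (cases "1 \<le> j \<and> j \<le> n")
    case True
    have "hmap B n (layout n x) (ones B) j = (\<Sum>i\<in>{t \<in> {1..B}. layout n x t = j}. 1)"
      unfolding hmap_def using True by (simp add: ones_def)
    also have "\<dots> = card ((\<lambda>l. l * n + j) ` {..<x j})" using layout_fibre True B by simp
    also have "\<dots> = x j" using n by (subst card_image) (auto simp: inj_on_def)
    finally show ?thesis .
  next
    case False
    then have "x j = 0" using x unfolding hcarrier_def by (cases "j = 0") auto
    then show ?thesis unfolding hmap_def if_not_P[OF False] by simp
  qed
qed

lemma ones_generate:
  assumes x: "x \<in> hcarrier n" and n: "n \<ge> 1"
  shows "\<exists>K f. pmap (2 ^ K) n f \<and> hmap (2 ^ K) n f (ones (2 ^ K)) = x"
proof -
  define K where "K = n * sum x {1..n}"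
  have "K \<le> 2 ^ K" by (simp add: less_imp_le)
  then show ?thesis using layout_pmap[OF n] hmap_layout[OF x n] unfolding K_def by blast
qed

lemma hring_map_ones_pow:
  assumes h: "hring_map R \<phi>"
  shows "\<phi> (2 ^ k) (ones (2 ^ k)) = rpow R (\<phi> 2 (ones 2)) k"
proof (induction k)
  case 0
  then show ?case using h ones_1 unfolding hring_map_def by simp
next
  case (Suc k)
  have "\<phi> (2 ^ k * 2) (hmult (2 ^ k) 2 (ones (2 ^ k)) (ones 2))
      = mult R (2 ^ k) 2 0 (\<phi> (2 ^ k) (ones (2 ^ k))) (\<phi> 2 (ones 2))"
    using h ones_hcarrier unfolding hring_map_def by blast
  then show ?case using Suc ones_mult_2[of "2 ^ k"] by (simp add: mult.commute)
qed

lemma hring_maps_eq: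
  fixes \<phi> \<phi>' :: "nat \<Rightarrow> (nat \<Rightarrow> nat) \<Rightarrow> 'a"
  assumes h: "hring_map R \<phi>" and h': "hring_map R \<phi>'"
    and gen: "\<phi> 2 (ones 2) = \<phi>' 2 (ones 2)" and x: "x \<in> hcarrier n"
  shows "\<phi> n x = \<phi>' n x"
proof (cases "n = 0")
  case True
  then have "x = (\<lambda>_. 0)" using x unfolding hcarrier_def by (auto simp: fun_eq_iff) (metis neq0_conv)
  then show ?thesis using h h' True unfolding hring_map_def by simp
next
  case False
  then obtain K f where f: "pmap (2 ^ K) n f" and x_eq: "hmap (2 ^ K) n f (ones (2 ^ K)) = x"
    using ones_generate[OF x] by (metis less_one not_le)
  have "\<phi> n x = gmap R (2 ^ K) n f 0 (\<phi> (2 ^ K) (ones (2 ^ K)))"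
    and "\<phi>' n x = gmap R (2 ^ K) n f 0 (\<phi>' (2 ^ K) (ones (2 ^ K)))"
    using h h' f x_eq ones_hcarrier unfolding hring_map_def by metis+
  then show ?thesis using hring_map_ones_pow[OF h] hring_map_ones_pow[OF h'] gen by simp
qed

lemma hring_map_restrict:
  fixes \<psi> :: "nat \<Rightarrow> (nat \<Rightarrow> int) \<Rightarrow> 'a"
  assumes h: "hring_map R \<psi>"
  shows "hring_map R (\<lambda>n (x :: nat \<Rightarrow> nat). \<psi> n (int \<circ> x))"
proof -
  have "int \<circ> (\<lambda>_::nat. 0::nat) = (\<lambda>_. 0)" by auto
  then have "\<forall>n. \<psi> n (int \<circ> (\<lambda>_. 0::nat)) = base R n 0"
    using h unfolding hring_map_def by simp
  then show ?thesis
    using h int_hcarrier int_hmap int_hmult int_hunit unfolding hring_map_def by simp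
qed

text \<open>kappa sends pm1 2 = (1,-1,-1,1) to 1_2.\<close>
lemma kappa_pm1_2: "hmap 4 2 kappa (pm1 2) = int \<circ> ones 2"
proof
  fix j
  let ?e = "\<lambda>i::nat. if i = 1 then 1 else if i = 2 then -1 else (0::int)"
  have fibres: "{i \<in> {1..4::nat}. kappa i = 1} = {1}" "{i \<in> {1..4::nat}. kappa i = 2} = {4}"
    using nat_le4_cases kappa_values by fastforce+
  have pm1_1: "pm1 1 = hmult 1 2 hunit ?e"
    using pm1.simps(2)[of 0] by simp
  have pm1_2: "pm1 2 = hmult 2 2 (pm1 1) ?e"
    using pm1.simps(2)[of 1] by (simp add: numeral_2_eq_2)
  have "pm1 1 1 = 1" "pm1 1 2 = -1" unfolding pm1_1 by (simp_all add: hmult_def hunit_def)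
  then have "pm1 2 1 = 1" "pm1 2 4 = 1" unfolding pm1_2 by (simp_all add: hmult_def)
  then show "hmap 4 2 kappa (pm1 2) j = (int \<circ> ones 2) j"
    using fibres unfolding hmap_def ones_def
    by (cases "j = 1"; cases "j = 2") simp_all
qed

lemma hN_map_factors:
  fixes \<phi> :: "nat \<Rightarrow> (nat \<Rightarrow> nat) \<Rightarrow> 'a" and \<psi> :: "nat \<Rightarrow> (nat \<Rightarrow> int) \<Rightarrow> 'a"
  assumes h\<phi>: "hring_map R \<phi>" and h\<psi>: "hring_map R \<psi>"
    and gen: "\<phi> 2 (ones 2) = gmap R 4 2 kappa 0 (\<psi> 4 (pm1 2))"
    and x: "x \<in> hcarrier n"
  shows "\<phi> n x = \<psi> n (int \<circ> x)"
proof -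
  have "pm1 2 \<in> hcarrier 4" using pm1_hcarrier[of 2] by simp
  then have "\<psi> 2 (hmap 4 2 kappa (pm1 2)) = gmap R 4 2 kappa 0 (\<psi> 4 (pm1 2))"
    using h\<psi> pmap_kappa unfolding hring_map_def by blast
  then have "\<psi> 2 (int \<circ> ones 2) = gmap R 4 2 kappa 0 (\<psi> 4 (pm1 2))"
    unfolding kappa_pm1_2 .
  then show ?thesis
    using hring_maps_eq[OF h\<phi> hring_map_restrict[OF h\<psi>] _ x] gen by simp
qed

context gring
begin

lemma hN_maps_agree:
  fixes \<phi> :: "nat \<Rightarrow> (nat \<Rightarrow> nat) \<Rightarrow> 'a" and \<psi> :: "nat \<Rightarrow> (nat \<Rightarrow> int) \<Rightarrow> 'a"
  assumes r: "r \<in> cells R 2 0"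
    and h\<phi>: "hring_map R \<phi>"
    and \<phi>_pow: "\<forall>n\<ge>1. \<phi> (2 ^ n) (ones (2 ^ n)) = rpow R (gmap R 4 2 kappa 0 (rpow R r 2)) n"
    and h\<psi>: "hring_map R \<psi>" and \<psi>_pow: "\<forall>n\<ge>1. \<psi> (2 ^ n) (pm1 n) = rpow R r n"
    and x: "x \<in> hcarrier n"
  shows "\<phi> n x = \<psi> n (int \<circ> x)"
proof -
  let ?w = "gmap R 4 2 kappa 0 (rpow R r 2)"
  have w: "?w \<in> cells R 2 0" using gmap_cells[OF pmap_kappa] rpow_cells[OF r, of 2] by simp
  have "\<phi> 2 (ones 2) = ?w" using \<phi>_pow[rule_format, of 1] rpow_1[OF w] by simp
  moreover have "\<psi> 4 (pm1 2) = rpow R r 2" using \<psi>_pow[rule_format, of 2] by simp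
  ultimately show ?thesis using hN_map_factors[OF h\<phi> h\<psi> _ x] by simp
qed

end

theorem mainTheorem3:
  fixes R :: "'a gamma_ring" and r :: 'a
  assumes "gamma_ring R" and "formal_difference_law R r"
  shows "mult R 1 1 0 (gmap R 2 1 (pp 2 1) 0 r) (gmap R 2 1 (pp 2 1) 0 r) = one R
    \<and> formal_sum_law R (gmap R 3 2 (pp 3 2) 0 (gmap R 4 3 (pp 4 2) 0 (rpow R r 2)))
    \<and> (discrete R \<longrightarrow>
        (\<forall>(\<phi> :: nat \<Rightarrow> (nat \<Rightarrow> nat) \<Rightarrow> 'a) (\<psi> :: nat \<Rightarrow> (nat \<Rightarrow> int) \<Rightarrow> 'a).
           hring_map R \<phi>
           \<and> (\<forall>n\<ge>1. \<phi> (2 ^ n) (ones (2 ^ n))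
                 = rpow R (gmap R 3 2 (pp 3 2) 0 (gmap R 4 3 (pp 4 2) 0 (rpow R r 2))) n)
           \<and> hring_map R \<psi>
           \<and> (\<forall>n\<ge>1. \<psi> (2 ^ n) (pm1 n) = rpow R r n)
           \<longrightarrow> (\<forall>n. \<forall>x\<in>hcarrier n. \<phi> n x = \<psi> n (int \<circ> x))))"
proof -
  interpret gring R by (rule gring.intro) (fact assms(1))
  have r: "r \<in> cells R 2 0" and p2: "gmap R 2 1 (pp 2 2) 0 r = one R"
    and swap: "mult R 1 2 0 (gmap R 2 1 (pp 2 1) 0 r) r = gmap R 2 2 swap2 0 r"
    using assms(2) unfolding formal_difference_law_def by blast+
  have "rpow R r 2 \<in> cells R 4 0" using rpow_cells[OF r, of 2] by simp
  then have w_eq: "gmap R 3 2 (pp 3 2) 0 (gmap R 4 3 (pp 4 2) 0 (rpow R r 2))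
                 = gmap R 4 2 kappa 0 (rpow R r 2)"
    unfolding kappa_def using gmap_comp[OF pmap_pp42 pmap_pp32] by blast
  show ?thesis
    unfolding w_eq
    using square_of_first_projection[OF r p2 swap] formal_sum_law_of_difference_law[OF assms(2)]
      hN_maps_agree[OF r]
    by blast
qed

end
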